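(* For $n=5$ leaves, any two quartet-matched pairs of binary trees $T_1,T_2$ and $T_3,T_4$ satisfy $\{T_1,T_2\}=\{T_3,T_4\}$. For $n=6$ leaves, every quartet-matched pair with $\{T_1,T_2\}\neq\{T_3,T_4\}$ is equivalent, up to the action of the symmetric group $\mathfrak{S}_6$ on leaf labels, to the pairs $T_1=\{12|3456,\,123|456,\,1234|56\}$, $T_2=\{13|2456,\,123|456,\,1235|46\}$, $T_3=\{13|2456,\,123|456,\,1234|56\}$, $T_4=\{12|3456,\,123|456,\,1235|46\}$.
   Context: Trees are unrooted binary trees with leaves labelled bijectively by $[n]$, described by their sets of nontrivial splits. For $Q\subseteq[n]$, $T|_Q$ denotes the induced subtree on leaf set $Q$. For trees $T_i,T_j$, $\mathcal{Q}(T_i,T_j)$ denotes the multiset of all quartet trees $T_i|_Q$ and $T_j|_Q$ for all four-element $Q\subseteq[n]$. Two pairs of trees $T_1,T_2$ and $T_3,T_4$ are quartet-matched if $\mathcal{Q}(T_1,T_2)=\mathcal{Q}(T_3,T_4)$. *)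

theory Defs
  imports "HOL-Library.Multiset" "HOL-Combinatorics.Permutations"
begin

text \<open>Leaves are labelled by [n] = {1..n}. A split of a leaf set L is the
unordered bipartition {A, L - A}; a tree is described by its set of nontrivial splits.\<close>

definition bipart :: "nat set \<Rightarrow> nat set \<Rightarrow> nat set set" where
  "bipart L A = {A, L - A}"

definition nontrivial_split :: "nat set \<Rightarrow> nat set set \<Rightarrow> bool" where
  "nontrivial_split L S \<longleftrightarrow>
     (\<exists>A. A \<subseteq> L \<and> S = bipart L A \<and> 2 \<le> card A \<and> 2 \<le> card (L - A))"

definition compatible_splits :: "nat set set \<Rightarrow> nat set set \<Rightarrow> bool" where
  "compatible_splits S1 S2 \<longleftrightarrow> (\<exists>A\<in>S1. \<exists>B\<in>S2. A \<inter> B = {})"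

definition binary_tree :: "nat \<Rightarrow> nat set set set \<Rightarrow> bool" where
  "binary_tree n T \<longleftrightarrow>
     (\<forall>S\<in>T. nontrivial_split {1..n} S) \<and>
     (\<forall>S1\<in>T. \<forall>S2\<in>T. compatible_splits S1 S2) \<and>
     card T = n - 3"

definition restrict_tree :: "nat set set set \<Rightarrow> nat set \<Rightarrow> nat set set set" where
  "restrict_tree T Q =
     {{A \<inter> Q, B \<inter> Q} | A B. {A, B} \<in> T \<and> 2 \<le> card (A \<inter> Q) \<and> 2 \<le> card (B \<inter> Q)}"

definition quartet_multiset ::
  "nat \<Rightarrow> nat set set set \<Rightarrow> nat set set set \<Rightarrow> (nat set \<times> nat set set set) multiset" where
  "quartet_multiset n Ti Tj =
     (\<Sum>Q\<in>{Q. Q \<subseteq> {1..n} \<and> card Q = 4}. {#(Q, restrict_tree Ti Q), (Q, restrict_tree Tj Q)#})"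

definition quartet_matched ::
  "nat \<Rightarrow> nat set set set \<Rightarrow> nat set set set \<Rightarrow> nat set set set \<Rightarrow> nat set set set \<Rightarrow> bool" where
  "quartet_matched n T1 T2 T3 T4 \<longleftrightarrow> quartet_multiset n T1 T2 = quartet_multiset n T3 T4"

definition relabel :: "(nat \<Rightarrow> nat) \<Rightarrow> nat set set set \<Rightarrow> nat set set set" where
  "relabel \<sigma> T = (\<lambda>S. (\<lambda>A. \<sigma> ` A) ` S) ` T"

definition E1 :: "nat set set set" where
  "E1 = {bipart {1..6} {1,2}, bipart {1..6} {1,2,3}, bipart {1..6} {1,2,3,4}}"
definition E2 :: "nat set set set" where
  "E2 = {bipart {1..6} {1,3}, bipart {1..6} {1,2,3}, bipart {1..6} {1,2,3,5}}"
definition E3 :: "nat set set set" where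
  "E3 = {bipart {1..6} {1,3}, bipart {1..6} {1,2,3}, bipart {1..6} {1,2,3,4}}"
definition E4 :: "nat set set set" where
  "E4 = {bipart {1..6} {1,2}, bipart {1..6} {1,2,3}, bipart {1..6} {1,2,3,5}}"

end

theory Submission
  imports Defs
begin

text \<open>On a quartet \<open>a < b < c < d\<close> a binary tree induces one of the three resolved quartet
trees, determined by the leaf of \<open>{b, c, d}\<close> that forms a cherry with \<open>a\<close>. Recording this
partner for every quartet gives a vector for each tree, and if \<open>T1, T2\<close> and \<open>T3, T4\<close> are
quartet-matched then at every quartet the two pairs of entries agree as multisets. Both claims
thereby become finite checks over the 15 resp. 105 binary trees, which are carried out by
evaluation. For six leaves, relabelling first moves \<open>T1\<close> to the caterpillar \<open>E1\<close> or to the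
snowflake with three cherries, and then \<open>T2\<close> to one of 23 resp. 8 orbit representatives of
the stabiliser of that tree. Each of the resulting 31 pairs is matched only by itself, except
that \<open>(E1, E2)\<close> is also matched by \<open>(E3, E4)\<close>.\<close>

section \<open>Binary trees as lists of splits\<close>

type_synonym split_code = "nat list \<times> nat list"
type_synonym tree_code = "split_code list"

definition split_of :: "split_code \<Rightarrow> nat set set" where
  "split_of p = {set (fst p), set (snd p)}"

definition tree_of :: "tree_code \<Rightarrow> nat set set set" where
  "tree_of t = split_of ` set t"

definition leaves :: "nat \<Rightarrow> nat list" where
  "leaves n = [1..<Suc n]"

lemma set_leaves [simp]: "set (leaves n) = {1..n}"
  by (auto simp: leaves_def)

definition split_codes :: "nat \<Rightarrow> split_code list" where
  "split_codes n = filter (\<lambda>(A, B). 1 \<in> set A \<and> 2 \<le> length A \<and> 2 \<le> length B)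
     (map (\<lambda>A. (A, filter (\<lambda>x. x \<notin> set A) (leaves n))) (subseqs (leaves n)))"

definition compatible_codes :: "split_code \<Rightarrow> split_code \<Rightarrow> bool" where
  "compatible_codes p q \<longleftrightarrow> compatible_splits (split_of p) (split_of q)"

fun compatible_subsets :: "nat \<Rightarrow> split_code list \<Rightarrow> tree_code list" where
  "compatible_subsets 0 ps = [[]]"
| "compatible_subsets (Suc k) [] = []"
| "compatible_subsets (Suc k) (p # ps) =
     map ((#) p) (compatible_subsets k (filter (compatible_codes p) ps)) @ compatible_subsets (Suc k) ps"

definition tree_codes :: "nat \<Rightarrow> tree_code list" where
  "tree_codes n = compatible_subsets (n - 3) (split_codes n)"

lemma split_codes_complete:
  assumes "nontrivial_split {1..n} S"
  shows "\<exists>p\<in>set (split_codes n). split_of p = S"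
proof -
  let ?L = "{1..n}"
  obtain A where A: "A \<subseteq> ?L" "S = bipart ?L A" "2 \<le> card A" "2 \<le> card (?L - A)"
    using assms unfolding nontrivial_split_def by blast
  have "1 \<in> ?L"
    using A(1,3) by (cases "n = 0") (auto simp: card_gt_0_iff)
  obtain B where B: "B \<subseteq> ?L" "1 \<in> B" "S = {B, ?L - B}" "2 \<le> card B" "2 \<le> card (?L - B)"
  proof (cases "1 \<in> A")
    case True
    then show ?thesis
      using A that[of A] by (simp add: bipart_def)
  next
    case False
    have "?L - (?L - A) = A"
      using A(1) by auto
    then show ?thesis
      using that[of "?L - A"] A False \<open>1 \<in> ?L\<close> by (auto simp: bipart_def insert_commute)
  qed
  obtain xs where xs: "xs \<in> set (subseqs (leaves n))" "set xs = B"
    using subset_subseqs[of B "leaves n"] B(1) by auto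
  have "distinct xs"
    using subseqs_distinctD[OF xs(1)] by (simp add: leaves_def)
  let ?ys = "filter (\<lambda>x. x \<notin> set xs) (leaves n)"
  have ys: "set ?ys = ?L - B" "distinct ?ys"
    using xs(2) by (auto simp: leaves_def)
  have "(xs, ?ys) \<in> set (split_codes n)"
    using xs B \<open>distinct xs\<close> ys distinct_card[of xs] distinct_card[of ?ys]
    unfolding split_codes_def by force
  moreover have "split_of (xs, ?ys) = S"
    using B(3) xs(2) ys(1) by (simp add: split_of_def)
  ultimately show ?thesis ..
qed

lemma compatible_subsets_complete:
  "I \<subseteq> set ps \<Longrightarrow> card I = k \<Longrightarrow> pairwise compatible_codes I \<Longrightarrow>
   \<exists>t\<in>set (compatible_subsets k ps). set t = I"
proof (induction k ps arbitrary: I rule: compatible_subsets.induct)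
  case (1 ps)
  then show ?case
    using finite_subset by fastforce
next
  case (2 k)
  then show ?case by simp
next
  case (3 k p ps)
  show ?case
  proof (cases "p \<in> I")
    case True
    have "I - {p} \<subseteq> set (filter (compatible_codes p) ps)"
      using "3.prems"(1,3) True by (auto simp: pairwise_def)
    moreover have "card (I - {p}) = k"
      using "3.prems"(1,2) True finite_subset by fastforce
    moreover have "pairwise compatible_codes (I - {p})"
      using "3.prems"(3) by (rule pairwise_subset) auto
    ultimately obtain t where "t \<in> set (compatible_subsets k (filter (compatible_codes p) ps))"
      "set t = I - {p}"
      using "3.IH"(1) by blast
    then show ?thesis
      using True by (intro bexI[of _ "p # t"]) auto
  next
    case False
    then have "I \<subseteq> set ps"
      using "3.prems"(1) by auto
    then obtain t where "t \<in> set (compatible_subsets (Suc k) ps)" "set t = I"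
      using "3.IH"(2) "3.prems"(2,3) by blast
    then show ?thesis
      by auto
  qed
qed

lemma binary_tree_tree_codes:
  assumes "binary_tree n T"
  shows "\<exists>t\<in>set (tree_codes n). T = tree_of t"
proof -
  have "\<forall>S\<in>T. \<exists>p\<in>set (split_codes n). split_of p = S"
    using assms split_codes_complete unfolding binary_tree_def by blast
  then obtain code where code: "\<And>S. S \<in> T \<Longrightarrow> code S \<in> set (split_codes n) \<and> split_of (code S) = S"
    by metis
  then have "inj_on code T"
    by (metis inj_onI)
  have "\<exists>t\<in>set (compatible_subsets (n - 3) (split_codes n)). set t = code ` T"
  proof (rule compatible_subsets_complete)
    show "code ` T \<subseteq> set (split_codes n)"
      using code by auto
    show "card (code ` T) = n - 3"
      using card_image[OF \<open>inj_on code T\<close>] assms by (simp add: binary_tree_def)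
    show "pairwise compatible_codes (code ` T)"
      using assms code unfolding binary_tree_def pairwise_def compatible_codes_def by auto
  qed
  then obtain t where "t \<in> set (tree_codes n)" "set t = code ` T"
    unfolding tree_codes_def by blast
  moreover have "tree_of t = T"
    using \<open>set t = code ` T\<close> code unfolding tree_of_def by (force simp: image_image)
  ultimately show ?thesis
    by auto
qed

section \<open>Quartet vectors\<close>

definition restrict_code :: "tree_code \<Rightarrow> nat list \<Rightarrow> tree_code" where
  "restrict_code t q =
     map (map_prod (filter (\<lambda>x. x \<in> set q)) (filter (\<lambda>x. x \<in> set q)))
       (filter (\<lambda>p. 2 \<le> card (set (fst p) \<inter> set q) \<and> 2 \<le> card (set (snd p) \<inter> set q)) t)"

lemma restrict_tree_image:
  "restrict_tree ((\<lambda>p. {f p, g p}) ` P) Q =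
    (\<lambda>p. {f p \<inter> Q, g p \<inter> Q}) ` {p \<in> P. 2 \<le> card (f p \<inter> Q) \<and> 2 \<le> card (g p \<inter> Q)}"
proof
  show "restrict_tree ((\<lambda>p. {f p, g p}) ` P) Q \<subseteq>
      (\<lambda>p. {f p \<inter> Q, g p \<inter> Q}) ` {p \<in> P. 2 \<le> card (f p \<inter> Q) \<and> 2 \<le> card (g p \<inter> Q)}"
  proof
    fix x assume "x \<in> restrict_tree ((\<lambda>p. {f p, g p}) ` P) Q"
    then obtain A B p where "x = {A \<inter> Q, B \<inter> Q}" "{A, B} = {f p, g p}" "p \<in> P"
      "2 \<le> card (A \<inter> Q)" "2 \<le> card (B \<inter> Q)"
      unfolding restrict_tree_def by auto
    then show "x \<in> (\<lambda>p. {f p \<inter> Q, g p \<inter> Q}) ` {p \<in> P. 2 \<le> card (f p \<inter> Q) \<and> 2 \<le> card (g p \<inter> Q)}"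
      by (auto simp: doubleton_eq_iff insert_commute)
  qed
  show "(\<lambda>p. {f p \<inter> Q, g p \<inter> Q}) ` {p \<in> P. 2 \<le> card (f p \<inter> Q) \<and> 2 \<le> card (g p \<inter> Q)}
      \<subseteq> restrict_tree ((\<lambda>p. {f p, g p}) ` P) Q"
    unfolding restrict_tree_def by blast
qed

lemma restrict_tree_tree_of: "restrict_tree (tree_of t) (set q) = tree_of (restrict_code t q)"
  unfolding tree_of_def split_of_def image_image restrict_tree_image
  by (simp add: restrict_code_def image_image Int_def)

definition partner :: "nat \<Rightarrow> nat set set set \<Rightarrow> nat" where
  "partner a R = Max (insert 0 (\<Union>{A \<in> \<Union>R. a \<in> A}))"

definition quartets :: "nat \<Rightarrow> nat list list" where
  "quartets n = filter (\<lambda>q. length q = 4) (subseqs (leaves n))"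

lemma quartets_subset_card: "q \<in> set (quartets n) \<Longrightarrow> set q \<subseteq> {1..n} \<and> card (set q) = 4"
proof -
  assume q: "q \<in> set (quartets n)"
  then have "q \<in> set (subseqs (leaves n))" "length q = 4"
    by (auto simp: quartets_def)
  moreover have "set q \<in> Pow (set (leaves n))"
    unfolding subseqs_powset[symmetric] using \<open>q \<in> set (subseqs (leaves n))\<close> by (rule imageI)
  moreover have "distinct q"
    using subseqs_distinctD[OF \<open>q \<in> set (subseqs (leaves n))\<close>] by (simp add: leaves_def)
  ultimately show ?thesis
    by (simp add: distinct_card)
qed

text \<open>Subsequences of \<open>leaves n\<close> are increasing, so \<open>hd q\<close> is the least leaf of \<open>q\<close>; its partner is
\<open>0\<close> when the restriction is unresolved.\<close>

definition quartet_code :: "nat \<Rightarrow> tree_code \<Rightarrow> nat list" where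
  "quartet_code n t = map (\<lambda>q. partner (hd q) (tree_of (restrict_code t q))) (quartets n)"

lemma quartet_multiset_count:
  assumes "Q \<subseteq> {1..n}" "card Q = 4"
  shows "count (quartet_multiset n T1 T2) (Q, R) = count {#restrict_tree T1 Q, restrict_tree T2 Q#} R"
proof -
  let ?Qs = "{Q. Q \<subseteq> {1..n} \<and> card Q = 4}"
  have "finite ?Qs"
    by (rule finite_subset[of _ "Pow {1..n}"]) auto
  have "count (quartet_multiset n T1 T2) (Q, R) =
      (\<Sum>Q'\<in>?Qs. if Q' = Q then count {#restrict_tree T1 Q, restrict_tree T2 Q#} R else 0)"
    unfolding quartet_multiset_def count_sum by (rule sum.cong) auto
  also have "\<dots> = count {#restrict_tree T1 Q, restrict_tree T2 Q#} R"
    using \<open>finite ?Qs\<close> assms by (simp add: sum.delta')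
  finally show ?thesis .
qed

lemma quartet_matched_restrict:
  assumes "quartet_matched n T1 T2 T3 T4" "Q \<subseteq> {1..n}" "card Q = 4"
  shows "{#restrict_tree T1 Q, restrict_tree T2 Q#} = {#restrict_tree T3 Q, restrict_tree T4 Q#}"
proof (rule multiset_eqI)
  fix R
  show "count {#restrict_tree T1 Q, restrict_tree T2 Q#} R = count {#restrict_tree T3 Q, restrict_tree T4 Q#} R"
    using assms quartet_multiset_count[of Q n] unfolding quartet_matched_def by metis
qed

fun same_pairs :: "nat list \<Rightarrow> nat list \<Rightarrow> nat list \<Rightarrow> nat list \<Rightarrow> bool" where
  "same_pairs (x # xs) (y # ys) (u # us) (v # vs) \<longleftrightarrow>
     (u = x \<and> v = y \<or> u = y \<and> v = x) \<and> same_pairs xs ys us vs"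
| "same_pairs [] [] [] [] \<longleftrightarrow> True"
| "same_pairs _ _ _ _ \<longleftrightarrow> False"

lemma pair_mset_eq_iff: "{#x, y#} = {#u, v#} \<longleftrightarrow> u = x \<and> v = y \<or> u = y \<and> v = x"
  by (auto simp: add_eq_conv_ex)

lemma same_pairs_map:
  "(\<And>x. x \<in> set xs \<Longrightarrow> {#f1 x, f2 x#} = {#f3 x, f4 x#}) \<Longrightarrow>
   same_pairs (map f1 xs) (map f2 xs) (map f3 xs) (map f4 xs)"
  by (induction xs) (simp_all add: pair_mset_eq_iff)

lemma same_pairs_swap: "same_pairs xs ys us vs \<Longrightarrow> same_pairs xs ys vs us"
  by (induction xs ys us vs rule: same_pairs.induct) auto

lemma quartet_matched_same_pairs:
  assumes "quartet_matched n (tree_of a) (tree_of b) (tree_of c) (tree_of d)"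
  shows "same_pairs (quartet_code n a) (quartet_code n b) (quartet_code n c) (quartet_code n d)"
  unfolding quartet_code_def
proof (rule same_pairs_map)
  fix q assume "q \<in> set (quartets n)"
  then have "{#restrict_tree (tree_of a) (set q), restrict_tree (tree_of b) (set q)#} =
      {#restrict_tree (tree_of c) (set q), restrict_tree (tree_of d) (set q)#}"
    using assms quartets_subset_card quartet_matched_restrict by blast
  then have "image_mset (partner (hd q)) {#tree_of (restrict_code a q), tree_of (restrict_code b q)#} =
      image_mset (partner (hd q)) {#tree_of (restrict_code c q), tree_of (restrict_code d q)#}"
    by (simp only: restrict_tree_tree_of)
  then show "{#partner (hd q) (tree_of (restrict_code a q)), partner (hd q) (tree_of (restrict_code b q))#} =
      {#partner (hd q) (tree_of (restrict_code c q)), partner (hd q) (tree_of (restrict_code d q))#}"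
    by simp
qed

section \<open>Relabelling\<close>

lemma relabel_comp: "relabel (\<sigma> \<circ> \<tau>) T = relabel \<sigma> (relabel \<tau> T)"
  unfolding relabel_def by (simp add: image_comp)

lemma relabel_id: "relabel id T = T"
  unfolding relabel_def by simp

lemma relabel_mono: "T \<subseteq> U \<Longrightarrow> relabel \<sigma> T \<subseteq> relabel \<sigma> U"
  unfolding relabel_def by (rule image_mono)

lemma inj_imp_inj_image: "inj f \<Longrightarrow> inj (image f)"
  using inj_on_image_Pow[of f UNIV] by simp

lemma inj_relabel: "inj \<sigma> \<Longrightarrow> inj (relabel \<sigma>)"
proof -
  assume "inj \<sigma>"
  then have "inj (image (image (image \<sigma>)))"
    by (intro inj_imp_inj_image)
  moreover have "relabel \<sigma> = image (image (image \<sigma>))"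
    by (rule ext) (simp add: relabel_def)
  ultimately show ?thesis
    by simp
qed

lemma relabel_inv_cancel: "bij \<sigma> \<Longrightarrow> relabel (inv \<sigma>) (relabel \<sigma> T) = T"
  by (simp add: relabel_comp[symmetric] bij_is_inj relabel_id)

lemma relabel_restrict_subset:
  assumes "inj \<sigma>"
  shows "relabel \<sigma> (restrict_tree T Q) \<subseteq> restrict_tree (relabel \<sigma> T) (\<sigma> ` Q)"
proof
  fix x assume "x \<in> relabel \<sigma> (restrict_tree T Q)"
  then obtain S where S: "S \<in> restrict_tree T Q" "x = (`) \<sigma> ` S"
    unfolding relabel_def by blast
  then obtain A B where AB: "{A, B} \<in> T" "2 \<le> card (A \<inter> Q)" "2 \<le> card (B \<inter> Q)"
    and "S = {A \<inter> Q, B \<inter> Q}"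
    unfolding restrict_tree_def by blast
  then have x: "x = {\<sigma> ` A \<inter> \<sigma> ` Q, \<sigma> ` B \<inter> \<sigma> ` Q}"
    using S(2) image_Int[OF assms] by simp
  have "(`) \<sigma> ` {A, B} \<in> relabel \<sigma> T"
    using AB(1) unfolding relabel_def by (rule imageI)
  then have "{\<sigma> ` A, \<sigma> ` B} \<in> relabel \<sigma> T"
    by simp
  moreover have "card (\<sigma> ` A \<inter> \<sigma> ` Q) = card (A \<inter> Q)" "card (\<sigma> ` B \<inter> \<sigma> ` Q) = card (B \<inter> Q)"
    unfolding image_Int[OF assms, symmetric] using card_image[OF inj_on_subset[OF assms subset_UNIV]]
    by simp_all
  ultimately have "x = {\<sigma> ` A \<inter> \<sigma> ` Q, \<sigma> ` B \<inter> \<sigma> ` Q} \<and> {\<sigma> ` A, \<sigma> ` B} \<in> relabel \<sigma> T \<and>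
      2 \<le> card (\<sigma> ` A \<inter> \<sigma> ` Q) \<and> 2 \<le> card (\<sigma> ` B \<inter> \<sigma> ` Q)"
    using AB(2,3) x by simp
  then show "x \<in> restrict_tree (relabel \<sigma> T) (\<sigma> ` Q)"
    unfolding restrict_tree_def by blast
qed

lemma restrict_tree_relabel:
  assumes "bij \<sigma>"
  shows "restrict_tree (relabel \<sigma> T) (\<sigma> ` Q) = relabel \<sigma> (restrict_tree T Q)"
proof
  show "relabel \<sigma> (restrict_tree T Q) \<subseteq> restrict_tree (relabel \<sigma> T) (\<sigma> ` Q)"
    using assms by (simp add: bij_is_inj relabel_restrict_subset)
  have "relabel (inv \<sigma>) (restrict_tree (relabel \<sigma> T) (\<sigma> ` Q)) \<subseteq> restrict_tree T Q"
    using relabel_restrict_subset[of "inv \<sigma>" "relabel \<sigma> T" "\<sigma> ` Q"] assms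
    by (simp add: bij_imp_bij_inv bij_is_inj relabel_inv_cancel image_inv_f_f)
  then have "relabel \<sigma> (relabel (inv \<sigma>) (restrict_tree (relabel \<sigma> T) (\<sigma> ` Q)))
      \<subseteq> relabel \<sigma> (restrict_tree T Q)"
    by (rule relabel_mono)
  moreover have "\<sigma> \<circ> inv \<sigma> = id"
    using bij_is_surj[OF assms] surj_iff by blast
  ultimately show "restrict_tree (relabel \<sigma> T) (\<sigma> ` Q) \<subseteq> relabel \<sigma> (restrict_tree T Q)"
    by (simp add: relabel_comp[symmetric] relabel_id)
qed

lemma permutes_image_subset_card:
  "\<sigma> permutes S \<Longrightarrow> Q \<subseteq> S \<Longrightarrow> \<sigma> ` Q \<subseteq> S \<and> card (\<sigma> ` Q) = card Q"
  using permutes_image[of \<sigma> S] card_image[OF inj_on_subset[OF permutes_inj subset_UNIV]] by blast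

lemma quartet_multiset_relabel:
  assumes "\<sigma> permutes {1..n}"
  shows "quartet_multiset n (relabel \<sigma> T1) (relabel \<sigma> T2) =
    image_mset (\<lambda>(Q, R). (\<sigma> ` Q, relabel \<sigma> R)) (quartet_multiset n T1 T2)"
proof -
  let ?Qs = "{Q. Q \<subseteq> {1..n} \<and> card Q = 4}"
  let ?f = "\<lambda>(Q, R). (\<sigma> ` Q, relabel \<sigma> R)"
  have bij: "bij \<sigma>"
    using assms by (rule permutes_bij)
  have image_Qs: "image \<sigma> ` ?Qs = ?Qs"
  proof
    show "image \<sigma> ` ?Qs \<subseteq> ?Qs"
      using permutes_image_subset_card[OF assms] by auto
    show "?Qs \<subseteq> image \<sigma> ` ?Qs"
    proof
      fix Q assume "Q \<in> ?Qs"
      then have "inv \<sigma> ` Q \<in> ?Qs"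
        using permutes_image_subset_card[OF permutes_inv[OF assms]] by auto
      moreover have "Q = \<sigma> ` inv \<sigma> ` Q"
        using bij by (simp add: bij_is_surj image_f_inv_f)
      ultimately show "Q \<in> image \<sigma> ` ?Qs"
        by blast
    qed
  qed
  have "bij_betw (image \<sigma>) ?Qs ?Qs"
    using inj_on_subset[OF inj_imp_inj_image[OF bij_is_inj[OF bij]] subset_UNIV] image_Qs
    by (rule bij_betw_imageI)
  then have "quartet_multiset n (relabel \<sigma> T1) (relabel \<sigma> T2) = (\<Sum>Q\<in>?Qs.
      {#(\<sigma> ` Q, restrict_tree (relabel \<sigma> T1) (\<sigma> ` Q)), (\<sigma> ` Q, restrict_tree (relabel \<sigma> T2) (\<sigma> ` Q))#})"
    unfolding quartet_multiset_def by (rule sum.reindex_bij_betw[symmetric])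
  also have "\<dots> = (\<Sum>Q\<in>?Qs. image_mset ?f {#(Q, restrict_tree T1 Q), (Q, restrict_tree T2 Q)#})"
    by (simp add: restrict_tree_relabel[OF bij])
  also have "\<dots> = image_mset ?f (quartet_multiset n T1 T2)"
    unfolding quartet_multiset_def by (rule sum_comp_morphism[of "image_mset ?f", unfolded comp_def]) simp_all
  finally show ?thesis .
qed

lemma quartet_matched_relabel:
  "\<sigma> permutes {1..n} \<Longrightarrow> quartet_matched n T1 T2 T3 T4 \<Longrightarrow>
   quartet_matched n (relabel \<sigma> T1) (relabel \<sigma> T2) (relabel \<sigma> T3) (relabel \<sigma> T4)"
  by (simp add: quartet_matched_def quartet_multiset_relabel)

lemma binary_tree_relabel:
  assumes perm: "\<sigma> permutes {1..n}" and tree: "binary_tree n T"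
  shows "binary_tree n (relabel \<sigma> T)"
proof -
  let ?L = "{1..n::nat}"
  let ?g = "\<lambda>S. (`) \<sigma> ` S"
  have inj: "inj \<sigma>"
    using perm by (rule permutes_inj)
  have card_\<sigma>: "card (\<sigma> ` X) = card X" for X
    using card_image[OF inj_on_subset[OF inj subset_UNIV]] .
  have nontrivial: "nontrivial_split ?L (?g S)" if "S \<in> T" for S
  proof -
    have "nontrivial_split ?L S"
      using tree that unfolding binary_tree_def by blast
    then obtain A where A: "A \<subseteq> ?L" "S = bipart ?L A" "2 \<le> card A" "2 \<le> card (?L - A)"
      unfolding nontrivial_split_def by blast
    have diff: "\<sigma> ` (?L - A) = ?L - \<sigma> ` A"
      using image_set_diff[OF inj] permutes_image[OF perm] by metis
    have "?g S = bipart ?L (\<sigma> ` A)"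
      using A(2) diff by (simp add: bipart_def)
    moreover have "\<sigma> ` A \<subseteq> ?L"
      using A(1) permutes_image[OF perm] by blast
    moreover have "2 \<le> card (\<sigma> ` A)" "2 \<le> card (?L - \<sigma> ` A)"
      using A(3,4) card_\<sigma>[of A] card_\<sigma>[of "?L - A"] diff by simp_all
    ultimately show ?thesis
      unfolding nontrivial_split_def by blast
  qed
  have compatible: "compatible_splits (?g S1) (?g S2)" if S12: "compatible_splits S1 S2" for S1 S2
  proof -
    obtain A B where AB: "A \<in> S1" "B \<in> S2" "A \<inter> B = {}"
      using S12 unfolding compatible_splits_def by blast
    have "\<sigma> ` A \<inter> \<sigma> ` B = {}"
      using AB(3) image_Int[OF inj, of A B] by simp
    then show ?thesis
      unfolding compatible_splits_def using AB(1,2) by blast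
  qed
  have "inj ?g"
    using inj by (intro inj_imp_inj_image)
  then have "card (?g ` T) = card T"
    using card_image[OF inj_on_subset[OF _ subset_UNIV]] by blast
  moreover have "\<forall>S\<in>?g ` T. nontrivial_split ?L S"
    using nontrivial by blast
  moreover have "\<forall>S1\<in>?g ` T. \<forall>S2\<in>?g ` T. compatible_splits S1 S2"
    using tree compatible unfolding binary_tree_def by blast
  ultimately show ?thesis
    using tree unfolding binary_tree_def relabel_def by simp
qed

lemma relabel_pair_eq_iff:
  assumes "inj \<sigma>"
  shows "{relabel \<sigma> A, relabel \<sigma> B} = {relabel \<sigma> C, relabel \<sigma> D} \<longleftrightarrow> {A, B} = {C, D}"
proof -
  have "relabel \<sigma> ` {A, B} = relabel \<sigma> ` {C, D} \<longleftrightarrow> {A, B} = {C, D}"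
    using inj_relabel[OF assms] by (rule inj_image_eq_iff)
  then show ?thesis
    by simp
qed

section \<open>Certificates\<close>

definition swaps_perm :: "(nat \<times> nat) list \<Rightarrow> nat \<Rightarrow> nat" where
  "swaps_perm ws = foldr (\<lambda>(a, b) f. transpose a b \<circ> f) ws id"

lemma swaps_perm_permutes: "\<forall>(a, b)\<in>set ws. a \<in> S \<and> b \<in> S \<Longrightarrow> swaps_perm ws permutes S"
  by (induction ws) (auto simp: swaps_perm_def permutes_id intro!: permutes_compose permutes_swap_id)

definition normalises :: "nat \<Rightarrow> tree_code list \<Rightarrow> tree_code list \<Rightarrow> (nat \<times> nat) list list \<Rightarrow> bool" where
  "normalises n fixed reps wss \<longleftrightarrow>
     list_all2 (\<lambda>t ws. (\<forall>(a, b)\<in>set ws. a \<in> {1..n} \<and> b \<in> {1..n}) \<and>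
         (\<forall>f\<in>set fixed. relabel (swaps_perm ws) (tree_of f) = tree_of f) \<and>
         (\<exists>r\<in>set reps. relabel (swaps_perm ws) (tree_of t) = tree_of r))
       (tree_codes n) wss"

lemma normalises_binary_tree:
  assumes "normalises n fixed reps wss" "binary_tree n T"
  obtains \<sigma> r where "\<sigma> permutes {1..n}" "\<forall>f\<in>set fixed. relabel \<sigma> (tree_of f) = tree_of f"
    "r \<in> set reps" "relabel \<sigma> T = tree_of r"
proof -
  obtain t where "t \<in> set (tree_codes n)" "T = tree_of t"
    using binary_tree_tree_codes[OF assms(2)] by blast
  then obtain i where i: "i < length (tree_codes n)" "tree_codes n ! i = t"
    by (auto simp: in_set_conv_nth)
  let ?ws = "wss ! i"
  have "(\<forall>(a, b)\<in>set ?ws. a \<in> {1..n} \<and> b \<in> {1..n}) \<and>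
      (\<forall>f\<in>set fixed. relabel (swaps_perm ?ws) (tree_of f) = tree_of f) \<and>
      (\<exists>r\<in>set reps. relabel (swaps_perm ?ws) (tree_of t) = tree_of r)"
    using assms(1) i unfolding normalises_def list_all2_conv_all_nth by blast
  then show thesis
    using that[of "swaps_perm ?ws"] swaps_perm_permutes \<open>T = tree_of t\<close> by blast
qed

definition coded :: "nat \<Rightarrow> tree_code \<Rightarrow> tree_code \<times> nat list" where
  "coded n t = (t, quartet_code n t)"

definition coded_trees :: "nat \<Rightarrow> (tree_code \<times> nat list) list" where
  "coded_trees n = map (coded n) (tree_codes n)"

definition matches_only ::
  "(tree_code \<times> nat list) list \<Rightarrow> (tree_code \<times> tree_code \<times> tree_code) list \<Rightarrow>
   tree_code \<times> nat list \<Rightarrow> tree_code \<times> nat list \<Rightarrow> bool" where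
  "matches_only cts exceptions a b \<longleftrightarrow> (\<forall>c\<in>set cts. \<forall>d\<in>set cts.
     same_pairs (snd a) (snd b) (snd c) (snd d) \<longrightarrow>
       (fst c, fst d) \<in> {(fst a, fst b), (fst b, fst a)} \<or> (fst b, fst c, fst d) \<in> set exceptions)"

fun entrywise_among :: "nat list \<Rightarrow> nat list \<Rightarrow> nat list \<Rightarrow> bool" where
  "entrywise_among (x # xs) (y # ys) (u # us) \<longleftrightarrow> (u = x \<or> u = y) \<and> entrywise_among xs ys us"
| "entrywise_among _ _ _ \<longleftrightarrow> True"

lemma same_pairs_entrywise_among: "same_pairs xs ys us vs \<Longrightarrow> entrywise_among xs ys us"
  by (induction xs ys us vs rule: same_pairs.induct) auto

text \<open>Only trees whose vector agrees entrywise with that of \<open>a\<close> or \<open>b\<close> can occur in a matching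
pair; filtering them first keeps evaluation by \<open>code_simp\<close> fast.\<close>

lemma matches_only_code [code]:
  "matches_only cts exceptions a b \<longleftrightarrow>
     (let cands = filter (\<lambda>c. entrywise_among (snd a) (snd b) (snd c)) cts in
      \<forall>c\<in>set cands. \<forall>d\<in>set cands. same_pairs (snd a) (snd b) (snd c) (snd d) \<longrightarrow>
        (fst c, fst d) \<in> {(fst a, fst b), (fst b, fst a)} \<or> (fst b, fst c, fst d) \<in> set exceptions)"
proof -
  have "entrywise_among (snd a) (snd b) (snd c) \<and> entrywise_among (snd a) (snd b) (snd d)"
    if "same_pairs (snd a) (snd b) (snd c) (snd d)" for c d
    using that same_pairs_entrywise_among same_pairs_swap by blast
  then show ?thesis
    unfolding matches_only_def Let_def set_filter by blast
qed

lemma matches_only_sound: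
  assumes "matches_only (coded_trees n) exceptions (coded n a) (coded n b)"
    and "binary_tree n T3" "binary_tree n T4"
    and "quartet_matched n (tree_of a) (tree_of b) T3 T4"
  shows "{T3, T4} = {tree_of a, tree_of b} \<or>
    (\<exists>c d. (b, c, d) \<in> set exceptions \<and> T3 = tree_of c \<and> T4 = tree_of d)"
proof -
  obtain c where c: "c \<in> set (tree_codes n)" "T3 = tree_of c"
    using binary_tree_tree_codes[OF assms(2)] by blast
  obtain d where d: "d \<in> set (tree_codes n)" "T4 = tree_of d"
    using binary_tree_tree_codes[OF assms(3)] by blast
  have "same_pairs (quartet_code n a) (quartet_code n b) (quartet_code n c) (quartet_code n d)"
    using quartet_matched_same_pairs assms(4) c(2) d(2) by blast
  then have "(c, d) \<in> {(a, b), (b, a)} \<or> (b, c, d) \<in> set exceptions"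
    using assms(1) c(1) d(1) unfolding matches_only_def coded_trees_def coded_def by fastforce
  then show ?thesis
    using c(2) d(2) by (auto simp: insert_commute)
qed

text \<open>The codes of \<open>E1\<close>, ..., \<open>E4\<close> are written exactly as they occur in \<open>tree_codes 6\<close> and
in \<open>caterpillar_reps\<close>, because \<open>matches_only\<close> compares codes literally.\<close>

definition E1_code :: tree_code where
  "E1_code = [([1, 2, 3, 4], [5, 6]), ([1, 2, 3], [4, 5, 6]), ([1, 2], [3, 4, 5, 6])]"

definition E2_code :: tree_code where
  "E2_code = [([1, 2, 3, 5], [4, 6]), ([1, 2, 3], [4, 5, 6]), ([1, 3], [2, 4, 5, 6])]"

definition E3_code :: tree_code where
  "E3_code = [([1, 2, 3, 4], [5, 6]), ([1, 2, 3], [4, 5, 6]), ([1, 3], [2, 4, 5, 6])]"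

definition E4_code :: tree_code where
  "E4_code = [([1, 2, 3, 5], [4, 6]), ([1, 2, 3], [4, 5, 6]), ([1, 2], [3, 4, 5, 6])]"

definition snowflake_code :: tree_code where
  "snowflake_code = [([1, 2, 3, 4], [5, 6]), ([1, 2, 5, 6], [3, 4]), ([1, 2], [3, 4, 5, 6])]"

text \<open>Witnesses for the symmetry reduction, listed in the order of \<open>tree_codes 6\<close>: products of
transpositions moving each tree to \<open>E1_code\<close> (the caterpillar) or to \<open>snowflake_code\<close>, and for
each of these two trees the orbit representatives of its stabiliser together with stabilising
products of transpositions moving each tree to one of them.\<close>

definition shape_normalisers :: "(nat \<times> nat) list list" where
  "shape_normalisers = [
    [], [(2, 3)], [(1, 3)], [(3, 4)], [(1, 3), (3, 4)], [(2, 3), (3, 4)], [], [(1, 3), (2, 4)],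
    [(1, 4), (2, 3)], [(2, 4), (3, 4)], [(2, 4)], [(1, 4)], [(1, 4)], [(1, 3)], [(1, 4), (3, 4)],
    [(4, 5)], [(2, 3), (4, 5)], [(1, 3), (4, 5)], [(3, 6)], [(1, 3), (2, 4), (4, 5)],
    [(1, 3), (2, 4), (3, 6)], [(3, 4), (4, 5)], [(1, 4), (2, 6)], [(1, 6), (2, 4)],
    [(1, 4), (2, 6)], [(1, 4), (4, 5)], [(2, 4), (3, 4), (4, 5)], [(2, 4), (4, 5)],
    [(1, 4), (3, 4), (4, 5)], [(1, 3), (4, 5)], [(4, 6)], [(2, 3), (4, 6)], [(1, 3), (4, 6)],
    [(3, 5)], [(1, 3), (2, 4), (4, 6)], [(1, 3), (2, 4), (3, 5)], [(3, 4), (4, 6)],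
    [(1, 4), (2, 5)], [(1, 5), (2, 4)], [(1, 4), (2, 5)], [(1, 4), (4, 6)],
    [(2, 4), (3, 4), (4, 6)], [(2, 4), (4, 6)], [(1, 4), (3, 4), (4, 6)], [(1, 3), (4, 6)],
    [(3, 5), (4, 5)], [(1, 3), (3, 5), (4, 5)], [(2, 3), (3, 5), (4, 5)], [(3, 5)],
    [(1, 3), (3, 5)], [(2, 3), (3, 5)], [(1, 3), (2, 6)], [(1, 3), (2, 6)], [(1, 4), (3, 5)],
    [(1, 4), (3, 5)], [(2, 4), (3, 5)], [(1, 6), (2, 3)], [(3, 6), (4, 6)],
    [(1, 3), (3, 6), (4, 6)], [(2, 3), (3, 6), (4, 6)], [(3, 6)], [(1, 3), (3, 6)],
    [(2, 3), (3, 6)], [(1, 3), (2, 5)], [(1, 3), (2, 5)], [(1, 4), (3, 6)], [(1, 4), (3, 6)],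
    [(2, 4), (3, 6)], [(1, 5), (2, 3)], [(3, 5), (4, 6)], [(1, 3), (3, 5), (4, 6)],
    [(1, 6), (2, 4), (3, 6)], [(3, 6), (4, 5)], [(1, 3), (3, 6), (4, 5)], [(1, 5), (2, 4), (3, 5)],
    [(1, 3), (2, 5), (4, 5)], [(1, 6)], [(1, 3), (2, 6), (4, 6)], [(1, 5)],
    [(1, 6), (2, 3), (4, 6)], [(1, 5), (2, 3), (4, 5)], [(1, 6), (3, 5)], [(2, 5), (4, 5)],
    [(2, 5), (3, 5)], [(2, 5)], [(1, 6), (4, 5)], [(1, 6)], [(1, 5), (3, 6)], [(2, 6), (4, 6)],
    [(2, 6), (3, 6)], [(2, 6)], [(1, 5), (4, 6)], [(1, 5)], [(1, 5), (3, 6), (4, 5)],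
    [(2, 5), (4, 6)], [(1, 6), (3, 5), (4, 6)], [(2, 6), (4, 5)], [(1, 6), (4, 6)],
    [(1, 5), (4, 5)], [(1, 6), (3, 6), (4, 5)], [(1, 6), (3, 6)], [(1, 5), (3, 5), (4, 6)],
    [(1, 5), (3, 5)], [(2, 5), (3, 6)], [(2, 6), (3, 5)]]"

definition caterpillar_reps :: "tree_code list" where
  "caterpillar_reps = [
    [([1, 2, 3, 4], [5, 6]), ([1, 2, 3], [4, 5, 6]), ([1, 2], [3, 4, 5, 6])],
    [([1, 2, 3, 4], [5, 6]), ([1, 2, 3], [4, 5, 6]), ([1, 3], [2, 4, 5, 6])],
    [([1, 2, 3, 4], [5, 6]), ([1, 2, 4], [3, 5, 6]), ([1, 2], [3, 4, 5, 6])],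
    [([1, 2, 3, 4], [5, 6]), ([1, 2, 4], [3, 5, 6]), ([1, 3, 5, 6], [2, 4])],
    [([1, 2, 3, 4], [5, 6]), ([1, 2, 5, 6], [3, 4]), ([1, 2], [3, 4, 5, 6])],
    [([1, 2, 3, 4], [5, 6]), ([1, 2, 5, 6], [3, 4]), ([1, 3, 4], [2, 5, 6])],
    [([1, 2, 3, 4], [5, 6]), ([1, 3, 4], [2, 5, 6]), ([1, 3], [2, 4, 5, 6])],
    [([1, 2, 3, 4], [5, 6]), ([1, 3, 4], [2, 5, 6]), ([1, 4], [2, 3, 5, 6])],
    [([1, 2, 3, 4], [5, 6]), ([1, 3, 5, 6], [2, 4]), ([1, 3], [2, 4, 5, 6])],
    [([1, 2, 3, 5], [4, 6]), ([1, 2, 3], [4, 5, 6]), ([1, 3], [2, 4, 5, 6])],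
    [([1, 2, 3, 5], [4, 6]), ([1, 2, 4, 6], [3, 5]), ([1, 3, 5], [2, 4, 6])],
    [([1, 2, 3, 5], [4, 6]), ([1, 2, 5], [3, 4, 6]), ([1, 3, 4, 6], [2, 5])],
    [([1, 2, 3, 5], [4, 6]), ([1, 3, 4, 6], [2, 5]), ([1, 3], [2, 4, 5, 6])],
    [([1, 2, 3, 5], [4, 6]), ([1, 3, 4, 6], [2, 5]), ([1, 4, 6], [2, 3, 5])],
    [([1, 2, 3, 5], [4, 6]), ([1, 3, 5], [2, 4, 6]), ([1, 3], [2, 4, 5, 6])],
    [([1, 2, 4, 5], [3, 6]), ([1, 2, 4], [3, 5, 6]), ([1, 3, 5, 6], [2, 4])],
    [([1, 2, 4, 5], [3, 6]), ([1, 2, 5], [3, 4, 6]), ([1, 3, 4, 6], [2, 5])],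
    [([1, 2, 4, 5], [3, 6]), ([1, 3, 4, 6], [2, 5]), ([1, 3, 6], [2, 4, 5])],
    [([1, 2, 4, 5], [3, 6]), ([1, 3, 4, 6], [2, 5]), ([1, 4], [2, 3, 5, 6])],
    [([1, 2, 4, 5], [3, 6]), ([1, 3, 5, 6], [2, 4]), ([1, 3, 6], [2, 4, 5])],
    [([1, 2, 5, 6], [3, 4]), ([1, 2, 5], [3, 4, 6]), ([1, 3, 4, 6], [2, 5])],
    [([1, 2, 5, 6], [3, 4]), ([1, 3, 4, 5], [2, 6]), ([1, 5], [2, 3, 4, 6])],
    [([1, 3, 4, 5], [2, 6]), ([1, 3, 5], [2, 4, 6]), ([1, 5], [2, 3, 4, 6])]]"

definition caterpillar_normalisers :: "(nat \<times> nat) list list" where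
  "caterpillar_normalisers = [
    [], [], [(1, 2)], [], [], [(1, 2)], [], [], [(1, 2)], [], [], [], [(1, 2)], [(1, 2)], [(1, 2)],
    [(1, 6), (2, 5), (3, 4)], [], [(1, 2)], [(1, 6), (2, 5), (3, 4)], [], [(1, 2)],
    [(1, 6), (2, 5), (3, 4)], [], [(1, 2)], [], [], [], [(1, 2)], [(1, 2)], [(1, 2)],
    [(1, 5), (2, 6), (3, 4)], [(5, 6)], [(1, 2), (5, 6)], [(1, 5), (2, 6), (3, 4)], [(5, 6)],
    [(1, 2), (5, 6)], [(1, 5), (2, 6), (3, 4)], [(5, 6)], [(1, 2), (5, 6)], [(5, 6)], [(5, 6)],
    [(5, 6)], [(1, 2), (5, 6)], [(1, 2), (5, 6)], [(1, 2), (5, 6)], [(1, 5), (2, 6), (3, 4)], [],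
    [(1, 2)], [(1, 6), (2, 5), (3, 4)], [], [(1, 2)], [], [], [], [(1, 2)], [(1, 2)], [(1, 2)],
    [(1, 6), (2, 5), (3, 4)], [(5, 6)], [(1, 2), (5, 6)], [(1, 5), (2, 6), (3, 4)], [(5, 6)],
    [(1, 2), (5, 6)], [(5, 6)], [(5, 6)], [(5, 6)], [(1, 2), (5, 6)], [(1, 2), (5, 6)],
    [(1, 2), (5, 6)], [(1, 6), (2, 5), (3, 4)], [], [(1, 2)], [(1, 5), (2, 6), (3, 4)], [(5, 6)],
    [(1, 2), (5, 6)], [(1, 6), (2, 5), (3, 4), (5, 6)], [], [(1, 6), (2, 5), (3, 4)], [(1, 2)],
    [(1, 5), (2, 6), (3, 4), (5, 6)], [(1, 5), (2, 6), (3, 4)], [(1, 6), (2, 5), (3, 4), (5, 6)],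
    [(1, 6), (2, 5), (3, 4), (5, 6)], [(1, 6), (2, 5), (3, 4), (5, 6)], [],
    [(1, 6), (2, 5), (3, 4), (5, 6)], [(1, 2), (5, 6)], [(1, 6), (2, 5), (3, 4)],
    [(1, 6), (2, 5), (3, 4)], [(1, 6), (2, 5), (3, 4)], [(5, 6)], [(1, 6), (2, 5), (3, 4)],
    [(1, 2)], [(1, 6), (2, 5), (3, 4)], [(1, 5), (2, 6), (3, 4), (5, 6)],
    [(1, 6), (2, 5), (3, 4), (5, 6)], [(1, 5), (2, 6), (3, 4)], [(1, 5), (2, 6), (3, 4), (5, 6)],
    [(1, 5), (2, 6), (3, 4)], [(1, 5), (2, 6), (3, 4)], [(1, 5), (2, 6), (3, 4), (5, 6)],
    [(1, 5), (2, 6), (3, 4), (5, 6)], [(1, 5), (2, 6), (3, 4)], [(1, 5), (2, 6), (3, 4), (5, 6)],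
    [(1, 5), (2, 6), (3, 4)]]"

definition snowflake_reps :: "tree_code list" where
  "snowflake_reps = [
    [([1, 2, 3, 4], [5, 6]), ([1, 2, 3], [4, 5, 6]), ([1, 2], [3, 4, 5, 6])],
    [([1, 2, 3, 4], [5, 6]), ([1, 2, 3], [4, 5, 6]), ([1, 3], [2, 4, 5, 6])],
    [([1, 2, 3, 4], [5, 6]), ([1, 2, 5, 6], [3, 4]), ([1, 2], [3, 4, 5, 6])],
    [([1, 2, 3, 4], [5, 6]), ([1, 3, 5, 6], [2, 4]), ([1, 3], [2, 4, 5, 6])],
    [([1, 2, 3, 5], [4, 6]), ([1, 2, 3], [4, 5, 6]), ([1, 3], [2, 4, 5, 6])],
    [([1, 2, 3, 5], [4, 6]), ([1, 2, 4, 6], [3, 5]), ([1, 3, 5], [2, 4, 6])],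
    [([1, 2, 3, 5], [4, 6]), ([1, 3, 4, 6], [2, 5]), ([1, 3], [2, 4, 5, 6])],
    [([1, 2, 3, 5], [4, 6]), ([1, 3, 4, 6], [2, 5]), ([1, 4, 6], [2, 3, 5])]]"

definition snowflake_normalisers :: "(nat \<times> nat) list list" where
  "snowflake_normalisers = [
    [], [], [(1, 2)], [(3, 4)], [(1, 2), (3, 4)], [(3, 4)], [], [(1, 3), (2, 4)], [(1, 4), (2, 3)],
    [(1, 3), (2, 4)], [(1, 3), (2, 4), (3, 4)], [], [(1, 4), (2, 3)], [(1, 2)],
    [(1, 4), (2, 3), (3, 4)], [(1, 6), (2, 5), (3, 4)], [], [(1, 2)], [(1, 5), (2, 6)], [],
    [(1, 2)], [(1, 5), (2, 6), (3, 6), (4, 5)], [(1, 2), (3, 5), (4, 6)], [(3, 5), (4, 6)], [], [],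
    [(1, 2), (3, 5), (4, 6)], [(1, 2)], [(3, 5), (4, 6)], [(1, 2)], [(1, 5), (2, 6), (3, 4)],
    [(5, 6)], [(1, 2), (5, 6)], [(1, 6), (2, 5)], [(5, 6)], [(3, 4)],
    [(1, 6), (2, 5), (3, 5), (4, 6)], [(1, 2), (3, 5), (4, 6), (5, 6)], [(3, 5), (4, 6), (5, 6)],
    [(5, 6)], [(5, 6)], [(1, 2), (3, 5), (4, 6), (5, 6)], [(1, 2), (5, 6)],
    [(3, 5), (4, 6), (5, 6)], [(1, 2), (5, 6)], [(1, 6), (2, 5)], [(1, 2), (3, 4)], [(3, 4)],
    [(1, 6), (2, 5), (3, 6), (4, 5)], [(1, 2), (3, 6), (4, 5), (5, 6)], [(3, 6), (4, 5), (5, 6)],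
    [(3, 4)], [(3, 4)], [(3, 6), (4, 5), (5, 6)], [(1, 2), (3, 4)],
    [(1, 2), (3, 6), (4, 5), (5, 6)], [(1, 2), (3, 4)], [(1, 5), (2, 6)], [(1, 5), (2, 6)],
    [(3, 4), (5, 6)], [(1, 5), (2, 6), (3, 5), (4, 6)], [(1, 2), (3, 6), (4, 5)], [(3, 6), (4, 5)],
    [(3, 4), (5, 6)], [(3, 4), (5, 6)], [(3, 6), (4, 5)], [(1, 4), (2, 3)],
    [(1, 2), (3, 6), (4, 5)], [(1, 4), (2, 3)], [(3, 5), (4, 6)], [(1, 2), (3, 5), (4, 6)],
    [(3, 5), (4, 6)], [(3, 6), (4, 5)], [(1, 2), (3, 6), (4, 5)], [(3, 6), (4, 5)],
    [(1, 4), (2, 3), (3, 5), (4, 6)], [(3, 5), (4, 6)], [(1, 4), (2, 3), (3, 6), (4, 5)],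
    [(3, 6), (4, 5)], [(1, 3), (2, 4), (3, 5), (4, 6)], [(1, 3), (2, 4), (3, 6), (4, 5)],
    [(1, 3), (2, 4)], [(1, 3), (2, 4), (3, 4)], [(1, 6), (2, 5), (3, 4), (5, 6)], [(1, 3), (2, 4)],
    [(1, 6), (2, 5), (5, 6)], [(1, 3), (2, 4), (3, 4)], [(1, 3), (2, 4), (5, 6)],
    [(1, 3), (2, 4), (3, 4), (5, 6)], [(1, 6), (2, 5), (3, 4)], [(1, 4), (2, 3)], [(1, 6), (2, 5)],
    [(1, 4), (2, 3), (3, 4)], [(1, 5), (2, 6)], [(1, 5), (2, 6), (5, 6)], [(1, 5), (2, 6), (5, 6)],
    [(1, 5), (2, 6)], [(1, 4), (2, 3), (5, 6)], [(1, 4), (2, 3)], [(1, 6), (2, 5)],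
    [(1, 5), (2, 6), (3, 4), (5, 6)], [(1, 6), (2, 5), (5, 6)], [(1, 5), (2, 6), (3, 4)],
    [(1, 4), (2, 3), (3, 4), (5, 6)], [(1, 4), (2, 3), (3, 4)]]"

lemma E_tree_of:
  "E1 = tree_of E1_code" "E2 = tree_of E2_code" "E3 = tree_of E3_code" "E4 = tree_of E4_code"
  by code_simp+

lemma shape_certificate: "normalises 6 [] [E1_code, snowflake_code] shape_normalisers"
  by code_simp

lemma caterpillar_certificate: "normalises 6 [E1_code] caterpillar_reps caterpillar_normalisers"
  by code_simp

lemma snowflake_certificate: "normalises 6 [snowflake_code] snowflake_reps snowflake_normalisers"
  by code_simp

lemma caterpillar_matches:
  "list_all (matches_only (coded_trees 6) [(E2_code, E3_code, E4_code), (E2_code, E4_code, E3_code)]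
     (coded 6 E1_code)) (map (coded 6) caterpillar_reps)"
  by code_simp

lemma snowflake_matches:
  "list_all (matches_only (coded_trees 6) [] (coded 6 snowflake_code)) (map (coded 6) snowflake_reps)"
  by code_simp

lemma five_leaf_matches:
  "\<forall>a\<in>set (coded_trees 5). \<forall>b\<in>set (coded_trees 5). matches_only (coded_trees 5) [] a b"
  by code_simp

lemma quartet_matched_five_leaves:
  assumes "binary_tree 5 T1" "binary_tree 5 T2" "binary_tree 5 T3" "binary_tree 5 T4"
    and "quartet_matched 5 T1 T2 T3 T4"
  shows "{T1, T2} = {T3, T4}"
proof -
  obtain a where a: "a \<in> set (tree_codes 5)" "T1 = tree_of a"
    using binary_tree_tree_codes[OF assms(1)] by blast
  obtain b where b: "b \<in> set (tree_codes 5)" "T2 = tree_of b"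
    using binary_tree_tree_codes[OF assms(2)] by blast
  have "matches_only (coded_trees 5) [] (coded 5 a) (coded 5 b)"
    using five_leaf_matches a(1) b(1) unfolding coded_trees_def by simp
  then have "{T3, T4} = {tree_of a, tree_of b} \<or>
      (\<exists>c d. (b, c, d) \<in> set [] \<and> T3 = tree_of c \<and> T4 = tree_of d)"
    using matches_only_sound assms(3,4) assms(5)[unfolded a(2) b(2)] by blast
  then show ?thesis
    using a(2) b(2) by simp
qed

lemma quartet_matched_pair_normal_form:
  assumes "normalises n [k] reps wss"
    and "list_all (matches_only (coded_trees n) exceptions (coded n k)) (map (coded n) reps)"
    and "binary_tree n T2" "binary_tree n T3" "binary_tree n T4"
    and "quartet_matched n (tree_of k) T2 T3 T4" "{tree_of k, T2} \<noteq> {T3, T4}"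
  obtains \<sigma> b c d where "\<sigma> permutes {1..n}" "b \<in> set reps" "(b, c, d) \<in> set exceptions"
    "relabel \<sigma> (tree_of k) = tree_of k" "relabel \<sigma> T2 = tree_of b"
    "relabel \<sigma> T3 = tree_of c" "relabel \<sigma> T4 = tree_of d"
proof -
  obtain \<sigma> b where \<sigma>: "\<sigma> permutes {1..n}" "\<forall>f\<in>set [k]. relabel \<sigma> (tree_of f) = tree_of f"
    and b: "b \<in> set reps" "relabel \<sigma> T2 = tree_of b"
    by (rule normalises_binary_tree[OF assms(1,3)])
  have k: "relabel \<sigma> (tree_of k) = tree_of k"
    using \<sigma>(2) by simp
  have matched: "quartet_matched n (tree_of k) (tree_of b) (relabel \<sigma> T3) (relabel \<sigma> T4)"
    using quartet_matched_relabel[OF \<sigma>(1) assms(6)] k b(2) by simp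
  have "matches_only (coded_trees n) exceptions (coded n k) (coded n b)"
    using assms(2) b(1) by (simp add: list_all_iff)
  then have "{relabel \<sigma> T3, relabel \<sigma> T4} = {tree_of k, tree_of b} \<or>
      (\<exists>c d. (b, c, d) \<in> set exceptions \<and> relabel \<sigma> T3 = tree_of c \<and> relabel \<sigma> T4 = tree_of d)"
    using binary_tree_relabel[OF \<sigma>(1) assms(4)] binary_tree_relabel[OF \<sigma>(1) assms(5)] matched
    by (rule matches_only_sound)
  moreover have "{relabel \<sigma> T3, relabel \<sigma> T4} \<noteq> {tree_of k, tree_of b}"
    using assms(7) relabel_pair_eq_iff[OF permutes_inj[OF \<sigma>(1)], of "tree_of k" T2 T3 T4] k b(2)
    by auto
  ultimately obtain c d where "(b, c, d) \<in> set exceptions"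
    "relabel \<sigma> T3 = tree_of c" "relabel \<sigma> T4 = tree_of d"
    by auto
  with \<sigma>(1) b k show thesis
    by (intro that)
qed

lemma quartet_matched_six_leaves:
  assumes trees: "binary_tree 6 T1" "binary_tree 6 T2" "binary_tree 6 T3" "binary_tree 6 T4"
    and matched: "quartet_matched 6 T1 T2 T3 T4" and distinct: "{T1, T2} \<noteq> {T3, T4}"
  shows "\<exists>\<sigma>. \<sigma> permutes {1..6} \<and>
    {{relabel \<sigma> T1, relabel \<sigma> T2}, {relabel \<sigma> T3, relabel \<sigma> T4}} = {{E1, E2}, {E3, E4}}"
proof -
  obtain \<sigma> k where \<sigma>: "\<sigma> permutes {1..6}" "\<forall>f\<in>set []. relabel \<sigma> (tree_of f) = tree_of f"
    and k: "k \<in> set [E1_code, snowflake_code]" and T1: "relabel \<sigma> T1 = tree_of k"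
    by (rule normalises_binary_tree[OF shape_certificate trees(1)])
  have trees': "binary_tree 6 (relabel \<sigma> T2)" "binary_tree 6 (relabel \<sigma> T3)" "binary_tree 6 (relabel \<sigma> T4)"
    using binary_tree_relabel[OF \<sigma>(1)] trees(2-4) by simp_all
  have matched': "quartet_matched 6 (tree_of k) (relabel \<sigma> T2) (relabel \<sigma> T3) (relabel \<sigma> T4)"
    using quartet_matched_relabel[OF \<sigma>(1) matched] T1 by simp
  have distinct': "{tree_of k, relabel \<sigma> T2} \<noteq> {relabel \<sigma> T3, relabel \<sigma> T4}"
    using distinct relabel_pair_eq_iff[OF permutes_inj[OF \<sigma>(1)], of T1 T2 T3 T4] T1 by simp
  consider (caterpillar) "k = E1_code" | (snowflake) "k = snowflake_code"
    using k by auto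
  then show ?thesis
  proof cases
    case caterpillar
    obtain \<tau> b c d where \<tau>: "\<tau> permutes {1..6}" and "b \<in> set caterpillar_reps"
      and bcd: "(b, c, d) \<in> set [(E2_code, E3_code, E4_code), (E2_code, E4_code, E3_code)]"
      and U: "relabel \<tau> (tree_of E1_code) = tree_of E1_code" "relabel \<tau> (relabel \<sigma> T2) = tree_of b"
        "relabel \<tau> (relabel \<sigma> T3) = tree_of c" "relabel \<tau> (relabel \<sigma> T4) = tree_of d"
      by (rule quartet_matched_pair_normal_form[OF caterpillar_certificate caterpillar_matches
          trees' matched'[unfolded caterpillar] distinct'[unfolded caterpillar]])
    from bcd have "b = E2_code" "(c, d) = (E3_code, E4_code) \<or> (c, d) = (E4_code, E3_code)"
      by auto
    then have "{{tree_of E1_code, tree_of b}, {tree_of c, tree_of d}} = {{E1, E2}, {E3, E4}}"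
      by (elim disjE) (simp_all add: E_tree_of insert_commute)
    then have "{{relabel (\<tau> \<circ> \<sigma>) T1, relabel (\<tau> \<circ> \<sigma>) T2}, {relabel (\<tau> \<circ> \<sigma>) T3, relabel (\<tau> \<circ> \<sigma>) T4}}
        = {{E1, E2}, {E3, E4}}"
      using T1 U caterpillar by (simp add: relabel_comp)
    moreover have "\<tau> \<circ> \<sigma> permutes {1..6}"
      using \<sigma>(1) \<tau> by (rule permutes_compose)
    ultimately show ?thesis
      by blast
  next
    case snowflake
    show ?thesis
      by (rule quartet_matched_pair_normal_form[OF snowflake_certificate snowflake_matches
          trees' matched'[unfolded snowflake] distinct'[unfolded snowflake]]) simp
  qed
qed

theorem proposition4:
  shows "(\<forall>T1 T2 T3 T4. binary_tree 5 T1 \<and> binary_tree 5 T2 \<and> binary_tree 5 T3 \<and>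
            binary_tree 5 T4 \<and> quartet_matched 5 T1 T2 T3 T4 \<longrightarrow> {T1, T2} = {T3, T4})
       \<and> (\<forall>T1 T2 T3 T4. binary_tree 6 T1 \<and> binary_tree 6 T2 \<and> binary_tree 6 T3 \<and>
            binary_tree 6 T4 \<and> quartet_matched 6 T1 T2 T3 T4 \<and> {T1, T2} \<noteq> {T3, T4} \<longrightarrow>
            (\<exists>\<sigma>. \<sigma> permutes {1..6} \<and>
               {{relabel \<sigma> T1, relabel \<sigma> T2}, {relabel \<sigma> T3, relabel \<sigma> T4}}
                 = {{E1, E2}, {E3, E4}}))"
proof (intro conjI allI impI)
  fix T1 T2 T3 T4
  assume "binary_tree 5 T1 \<and> binary_tree 5 T2 \<and> binary_tree 5 T3 \<and> binary_tree 5 T4 \<and>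
    quartet_matched 5 T1 T2 T3 T4"
  then show "{T1, T2} = {T3, T4}"
    by (elim conjE) (rule quartet_matched_five_leaves)
next
  fix T1 T2 T3 T4
  assume "binary_tree 6 T1 \<and> binary_tree 6 T2 \<and> binary_tree 6 T3 \<and> binary_tree 6 T4 \<and>
    quartet_matched 6 T1 T2 T3 T4 \<and> {T1, T2} \<noteq> {T3, T4}"
  then show "\<exists>\<sigma>. \<sigma> permutes {1..6} \<and>
      {{relabel \<sigma> T1, relabel \<sigma> T2}, {relabel \<sigma> T3, relabel \<sigma> T4}} = {{E1, E2}, {E3, E4}}"
    by (elim conjE) (rule quartet_matched_six_leaves)
qed

end
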